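(* Let $(X,\phi)$ be a flow on a compact metric space $(X,d)$. For every $\epsilon>0$ the limit $\lim_{t\to\infty}\frac1t\log\#(\phi,X,d_t,\epsilon)$ exists, and \begin{align*} \overline{\mathrm{mdim}}_M(\phi,X,d)&=\limsup_{\epsilon\to0}\lim_{t\to\infty}\frac{\log\#(\phi,X,d_t,\epsilon)}{t\log\frac1\epsilon}=\limsup_{\epsilon\to0}\limsup_{t\to\infty}\frac{\log s_t(\phi,X,d,\epsilon)}{t\log\frac1\epsilon},\\ \underline{\mathrm{mdim}}_M(\phi,X,d)&=\liminf_{\epsilon\to0}\lim_{t\to\infty}\frac{\log\#(\phi,X,d_t,\epsilon)}{t\log\frac1\epsilon}=\liminf_{\epsilon\to0}\limsup_{t\to\infty}\frac{\log s_t(\phi,X,d,\epsilon)}{t\log\frac1\epsilon}. \end{align*}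
   Context: A flow: $\phi:X\times\mathbb{R}\to X$ continuous, $\phi_t(x)=\phi(x,t)$, $\phi_0=\mathrm{id}$, $\phi_{t+s}=\phi_t\circ\phi_s$. $d_t(x,y)=\max_{s\in[0,t]}d(\phi_sx,\phi_sy)$. $\#(\phi,X,d_t,\epsilon)$ is the minimal cardinality of an open cover of $X$ each of whose members has $d_t$-diameter less than $\epsilon$. $s_t(\phi,X,d,\epsilon)$ is the maximal cardinality of a set $F\subset X$ with $d_t(x,y)\ge\epsilon$ for all distinct $x,y\in F$. $r_t(\phi,X,d,\epsilon)$ is the minimal cardinality of $E\subset X$ such that every $x\in X$ has $y\in E$ with $d_t(x,y)<\epsilon$; $r(\phi,X,d,\epsilon)=\limsup_{t\to\infty}\frac1t\log r_t(\phi,X,d,\epsilon)$; $\overline{\mathrm{mdim}}_M(\phi,X,d)=\limsup_{\epsilon\to0}\frac{r(\phi,X,d,\epsilon)}{\log(1/\epsilon)}$ and $\underline{\mathrm{mdim}}_M$ is the same with $\liminf_{\epsilon\to0}$. *)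

theory Defs
  imports "HOL-Analysis.Analysis"
begin

definition flow :: "'a::metric_space set \<Rightarrow> ('a \<Rightarrow> real \<Rightarrow> 'a) \<Rightarrow> bool" where
  "flow X \<phi> \<longleftrightarrow>
     continuous_on (X \<times> UNIV) (\<lambda>(x, t). \<phi> x t) \<and>
     (\<forall>x\<in>X. \<forall>t. \<phi> x t \<in> X) \<and>
     (\<forall>x\<in>X. \<phi> x 0 = x) \<and>
     (\<forall>x\<in>X. \<forall>t s. \<phi> x (t + s) = \<phi> (\<phi> x s) t)"

definition bowen_dist :: "('a::metric_space \<Rightarrow> real \<Rightarrow> 'a) \<Rightarrow> real \<Rightarrow> 'a \<Rightarrow> 'a \<Rightarrow> real" where
  "bowen_dist \<phi> t x y = (SUP s\<in>{0..t}. dist (\<phi> x s) (\<phi> y s))"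

text \<open>d_t-diameter of a set (as an extended real; the empty set has diameter -infinity).\<close>
definition bowen_diam :: "('a::metric_space \<Rightarrow> real \<Rightarrow> 'a) \<Rightarrow> real \<Rightarrow> 'a set \<Rightarrow> ereal" where
  "bowen_diam \<phi> t U = (SUP p\<in>U \<times> U. ereal (bowen_dist \<phi> t (fst p) (snd p)))"

definition cover_num :: "('a::metric_space \<Rightarrow> real \<Rightarrow> 'a) \<Rightarrow> 'a set \<Rightarrow> real \<Rightarrow> real \<Rightarrow> nat" where
  "cover_num \<phi> X t \<epsilon> = Inf {card \<U> | \<U>. finite \<U> \<and> (\<forall>U\<in>\<U>. openin (top_of_set X) U) \<and>
       X \<subseteq> \<Union>\<U> \<and> (\<forall>U\<in>\<U>. bowen_diam \<phi> t U < ereal \<epsilon>)}"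

definition sep_num :: "('a::metric_space \<Rightarrow> real \<Rightarrow> 'a) \<Rightarrow> 'a set \<Rightarrow> real \<Rightarrow> real \<Rightarrow> nat" where
  "sep_num \<phi> X t \<epsilon> = Sup {card F | F. finite F \<and> F \<subseteq> X \<and>
       (\<forall>x\<in>F. \<forall>y\<in>F. x \<noteq> y \<longrightarrow> bowen_dist \<phi> t x y \<ge> \<epsilon>)}"

definition span_num :: "('a::metric_space \<Rightarrow> real \<Rightarrow> 'a) \<Rightarrow> 'a set \<Rightarrow> real \<Rightarrow> real \<Rightarrow> nat" where
  "span_num \<phi> X t \<epsilon> = Inf {card E | E. finite E \<and> E \<subseteq> X \<and>
       (\<forall>x\<in>X. \<exists>y\<in>E. bowen_dist \<phi> t x y < \<epsilon>)}"

definition span_rate :: "('a::metric_space \<Rightarrow> real \<Rightarrow> 'a) \<Rightarrow> 'a set \<Rightarrow> real \<Rightarrow> ereal" where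
  "span_rate \<phi> X \<epsilon> = Limsup at_top (\<lambda>t. ereal (ln (real (span_num \<phi> X t \<epsilon>)) / t))"

definition upper_mmdim :: "('a::metric_space \<Rightarrow> real \<Rightarrow> 'a) \<Rightarrow> 'a set \<Rightarrow> ereal" where
  "upper_mmdim \<phi> X = Limsup (at_right 0) (\<lambda>\<epsilon>. span_rate \<phi> X \<epsilon> / ereal (ln (1 / \<epsilon>)))"

definition lower_mmdim :: "('a::metric_space \<Rightarrow> real \<Rightarrow> 'a) \<Rightarrow> 'a set \<Rightarrow> ereal" where
  "lower_mmdim \<phi> X = Liminf (at_right 0) (\<lambda>\<epsilon>. span_rate \<phi> X \<epsilon> / ereal (ln (1 / \<epsilon>)))"

end

theory Submission
  imports Defs "HOL-Real_Asymp.Real_Asymp"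
begin

text \<open>
  The covering numbers \<open>#(\<phi>, X, d\<^sub>t, \<epsilon>)\<close> are nondecreasing and submultiplicative in \<open>t\<close>:
  intersecting a cover for time \<open>t\<close> with the preimage under \<open>\<phi>\<^sub>t\<close> of a cover for time \<open>s\<close>
  gives a cover for time \<open>t + s\<close>. By Fekete's lemma \<open>log #(\<phi>, X, d\<^sub>t, \<epsilon>) / t\<close> converges.
  The three counting functions are comparable,
  \<open>r\<^sub>t(\<epsilon>) \<le> #(\<phi>, X, d\<^sub>t, \<epsilon>) \<le> r\<^sub>t(\<epsilon>/3)\<close> and \<open>r\<^sub>t(\<epsilon>) \<le> s\<^sub>t(\<epsilon>) \<le> r\<^sub>t(\<epsilon>/2) \<le> r\<^sub>t(\<epsilon>/3)\<close>,
  and replacing \<open>\<epsilon>\<close> by \<open>\<epsilon>/3\<close> does not change the upper or lower limit of a nonnegative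
  growth rate divided by \<open>log (1/\<epsilon>)\<close>, because \<open>log (3/\<epsilon>) / log (1/\<epsilon>) \<rightarrow> 1\<close>.
\<close>

text \<open>Since \<open>ln 0 = 0\<close>, \<open>ln \<circ> real\<close> is nonnegative, monotone and subadditive on all of \<open>nat\<close>;
  this spares a separate treatment of \<open>X = {}\<close>, where all counting numbers vanish.\<close>

lemma ln_real_nat_nonneg: "0 \<le> ln (real n)"
  by (cases "n = 0") (auto intro: ln_ge_zero)

lemma ln_real_nat_mono:
  assumes "m \<le> n"
  shows "ln (real m) \<le> ln (real n)"
  using assms ln_real_nat_nonneg[of n] by (cases "m = 0") auto

lemma ln_real_nat_le_add:
  assumes "k \<le> m * n"
  shows "ln (real k) \<le> ln (real m) + ln (real n)"
proof (cases "m = 0 \<or> n = 0")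
  case True
  then show ?thesis
    using assms ln_real_nat_nonneg[of m] ln_real_nat_nonneg[of n] by auto
next
  case False
  have "ln (real k) \<le> ln (real (m * n))"
    using assms by (rule ln_real_nat_mono)
  also have "\<dots> = ln (real m) + ln (real n)"
    using False by (simp add: ln_mult)
  finally show ?thesis .
qed

section \<open>Fekete's lemma in continuous time\<close>

lemma subadditive_le_of_nat_mult:
  fixes f :: "real \<Rightarrow> real"
  assumes sub: "\<And>s t. 0 \<le> s \<Longrightarrow> 0 \<le> t \<Longrightarrow> f (s + t) \<le> f s + f t"
    and "0 \<le> T" "1 \<le> n"
  shows "f (real n * T) \<le> real n * f T"
  using \<open>1 \<le> n\<close>
proof (induction n rule: dec_induct)
  case (step n)
  have "f (real (Suc n) * T) = f (real n * T + T)"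
    by (simp add: algebra_simps)
  also have "\<dots> \<le> f (real n * T) + f T"
    using \<open>0 \<le> T\<close> by (intro sub) auto
  also have "\<dots> \<le> real (Suc n) * f T"
    using step.IH by (simp add: algebra_simps)
  finally show ?case .
qed simp

lemma subadditive_divide_le:
  fixes f :: "real \<Rightarrow> real"
  assumes nonneg: "\<And>t. 0 \<le> t \<Longrightarrow> 0 \<le> f t"
    and mono: "\<And>s t. 0 \<le> s \<Longrightarrow> s \<le> t \<Longrightarrow> f s \<le> f t"
    and sub: "\<And>s t. 0 \<le> s \<Longrightarrow> 0 \<le> t \<Longrightarrow> f (s + t) \<le> f s + f t"
    and "0 < T" "0 < t"
  shows "f t / t \<le> f T / T + f T / t"
proof -
  define n where "n = nat \<lceil>t / T\<rceil>"
  have "0 < t / T"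
    using \<open>0 < t\<close> \<open>0 < T\<close> by simp
  then have n: "t / T \<le> real n" "real n \<le> t / T + 1"
    unfolding n_def using le_of_int_ceiling[of "t / T"] of_int_ceiling_le_add_one[of "t / T"]
    by auto
  with \<open>0 < t / T\<close> have "1 \<le> n"
    by (cases n) auto
  have "f t \<le> f (real n * T)"
    using n(1) \<open>0 < t\<close> \<open>0 < T\<close> by (intro mono) (auto simp: pos_divide_le_eq)
  also have "\<dots> \<le> real n * f T"
    using sub \<open>0 < T\<close> \<open>1 \<le> n\<close> by (intro subadditive_le_of_nat_mult) auto
  also have "\<dots> \<le> (t / T + 1) * f T"
    using n(2) nonneg[of T] \<open>0 < T\<close> by (intro mult_right_mono) auto
  finally have "f t / t \<le> (t / T + 1) * f T / t"
    using \<open>0 < t\<close> by (intro divide_right_mono) auto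
  also have "\<dots> = f T / T + f T / t"
    using \<open>0 < t\<close> \<open>0 < T\<close> by (simp add: field_simps)
  finally show ?thesis .
qed

text \<open>Monotonicity stands in for the usual local boundedness hypothesis.\<close>

lemma subadditive_tendsto_Inf:
  fixes f :: "real \<Rightarrow> real"
  assumes nonneg: "\<And>t. 0 \<le> t \<Longrightarrow> 0 \<le> f t"
    and mono: "\<And>s t. 0 \<le> s \<Longrightarrow> s \<le> t \<Longrightarrow> f s \<le> f t"
    and sub: "\<And>s t. 0 \<le> s \<Longrightarrow> 0 \<le> t \<Longrightarrow> f (s + t) \<le> f s + f t"
  shows "((\<lambda>t. f t / t) \<longlongrightarrow> (INF t\<in>{0<..}. f t / t)) at_top"
proof -
  let ?L = "INF t\<in>{0<..}. f t / t"
  have bdd: "bdd_below ((\<lambda>t. f t / t) ` {0<..})"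
  proof (rule bdd_belowI2)
    fix t :: real
    assume "t \<in> {0<..}"
    then show "0 \<le> f t / t"
      using nonneg[of t] by simp
  qed
  have "eventually (\<lambda>t. a < f t / t) at_top" if "a < ?L" for a
    using eventually_gt_at_top[of 0]
  proof eventually_elim
    fix t :: real
    assume "0 < t"
    then have "?L \<le> f t / t"
      using bdd by (intro cINF_lower) auto
    with \<open>a < ?L\<close> show "a < f t / t"
      by linarith
  qed
  moreover have "eventually (\<lambda>t. f t / t < a) at_top" if "?L < a" for a
  proof -
    obtain T where T: "0 < T" "f T / T < a"
      using \<open>?L < a\<close> cINF_less_iff[OF _ bdd] by auto
    have "((\<lambda>t. f T / T + f T / t) \<longlongrightarrow> f T / T + 0) at_top"
      by (intro tendsto_add tendsto_const tendsto_divide_0[OF tendsto_const]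
          filterlim_at_top_imp_at_infinity filterlim_ident)
    then have "eventually (\<lambda>t. f T / T + f T / t < a) at_top"
      using T(2) by (intro order_tendstoD(2)) auto
    moreover have "eventually (\<lambda>t. f t / t \<le> f T / T + f T / t) at_top"
      using eventually_gt_at_top[of 0]
      by eventually_elim (use nonneg mono sub T(1) in \<open>rule subadditive_divide_le\<close>)
    ultimately show ?thesis
      by eventually_elim linarith
  qed
  ultimately show ?thesis
    by (rule order_tendstoI)
qed

section \<open>Rescaling \<open>\<epsilon>\<close> against \<open>log (1/\<epsilon>)\<close>\<close>

lemma ereal_le_if_le_mult_gt_one:
  fixes x L :: ereal
  assumes le: "\<And>c::real. 1 < c \<Longrightarrow> x \<le> L * ereal c" and "0 \<le> L"
  shows "x \<le> L"
proof (rule ereal_le_mult_one_interval)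
  show "L \<noteq> -\<infinity>"
    using \<open>0 \<le> L\<close> by auto
  fix z :: ereal
  assume "0 < z" "z < 1"
  then obtain r where r: "z = ereal r" "0 < r" "r < 1"
    by (cases z) auto
  have "z * x \<le> z * (L * ereal (1 / r))"
    using le[of "1 / r"] r by (intro ereal_mult_left_mono) auto
  also have "\<dots> = L * ereal (r * (1 / r))"
    using r(1) by (simp add: ac_simps)
  also have "\<dots> = L"
    using r by simp
  finally show "z * x \<le> L" .
qed

lemma ereal_divide_eq_mult_inverse: "q \<noteq> 0 \<Longrightarrow> x / ereal q = x * ereal (1 / q)"
  by (simp add: divide_ereal_def divide_real_def)

lemma filtermap_divide_at_right_0:
  assumes "0 < k"
  shows "filtermap (\<lambda>\<epsilon>. \<epsilon> / k) (at_right 0) = at_right (0::real)"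
proof -
  have "(\<lambda>\<epsilon>::real. \<epsilon> / k) = (*) (1 / k)"
    by (auto simp: fun_eq_iff)
  then show ?thesis
    using filtermap_times_pos_at_right[of "1 / k" 0] assms by simp
qed

lemma Limsup_at_right_0_rescale:
  fixes h :: "real \<Rightarrow> 'b::complete_linorder"
  assumes "0 < k"
  shows "Limsup (at_right 0) (\<lambda>\<epsilon>. h (\<epsilon> / k)) = Limsup (at_right 0) h"
proof -
  have "inj (\<lambda>\<epsilon>::real. \<epsilon> / k)"
    using assms by (auto intro: injI)
  then show ?thesis
    using filtermap_divide_at_right_0[OF assms] Limsup_filtermap_eq[of "\<lambda>\<epsilon>. \<epsilon> / k" "at_right 0" h] by simp
qed

lemma Liminf_at_right_0_rescale:
  fixes h :: "real \<Rightarrow> 'b::complete_linorder"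
  assumes "0 < k"
  shows "Liminf (at_right 0) (\<lambda>\<epsilon>. h (\<epsilon> / k)) = Liminf (at_right 0) h"
proof -
  have "inj (\<lambda>\<epsilon>::real. \<epsilon> / k)"
    using assms by (auto intro: injI)
  then show ?thesis
    using filtermap_divide_at_right_0[OF assms] Liminf_filtermap_eq[of "\<lambda>\<epsilon>. \<epsilon> / k" "at_right 0" h] by simp
qed

lemma eventually_divide_ln_inverse_mono:
  fixes f g :: "real \<Rightarrow> ereal"
  assumes "\<And>\<epsilon>. 0 < \<epsilon> \<Longrightarrow> f \<epsilon> \<le> g \<epsilon>"
  shows "eventually (\<lambda>\<epsilon>. f \<epsilon> / ereal (ln (1 / \<epsilon>)) \<le> g \<epsilon> / ereal (ln (1 / \<epsilon>))) (at_right 0)"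
proof -
  have "eventually (\<lambda>\<epsilon>. \<epsilon> \<in> {0<..<1::real}) (at_right 0)"
    by (rule eventually_at_right_real) simp
  then show ?thesis
    by eventually_elim (use assms in \<open>auto intro: ereal_divide_right_mono\<close>)
qed

lemma eventually_divide_ln_inverse_le_rescaled:
  fixes A R :: "real \<Rightarrow> ereal"
  assumes R_nonneg: "\<And>\<epsilon>. 0 < \<epsilon> \<Longrightarrow> 0 \<le> R \<epsilon>"
    and upper: "\<And>\<epsilon>. 0 < \<epsilon> \<Longrightarrow> A \<epsilon> \<le> R (\<epsilon> / k)"
    and "0 < k" "1 < c"
  shows "eventually (\<lambda>\<epsilon>. A \<epsilon> / ereal (ln (1 / \<epsilon>))
           \<le> R (\<epsilon> / k) / ereal (ln (1 / (\<epsilon> / k))) * ereal c) (at_right 0)"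
proof -
  have "((\<lambda>\<epsilon>. ln (1 / (\<epsilon> / k)) / ln (1 / \<epsilon>)) \<longlongrightarrow> 1) (at_right 0)"
    using \<open>0 < k\<close> by real_asymp
  then have "eventually (\<lambda>\<epsilon>. ln (1 / (\<epsilon> / k)) / ln (1 / \<epsilon>) < c) (at_right 0)"
    using \<open>1 < c\<close> by (rule order_tendstoD)
  moreover have "eventually (\<lambda>\<epsilon>. \<epsilon> \<in> {0<..<min 1 k}) (at_right 0)"
    using \<open>0 < k\<close> by (intro eventually_at_right_real) simp
  ultimately show ?thesis
  proof eventually_elim
    fix \<epsilon> :: real
    assume ratio: "ln (1 / (\<epsilon> / k)) / ln (1 / \<epsilon>) < c" and \<epsilon>: "\<epsilon> \<in> {0<..<min 1 k}"
    define q q' where "q = ln (1 / \<epsilon>)" and "q' = ln (1 / (\<epsilon> / k))"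
    have "0 < q" "0 < q'"
      using \<epsilon> \<open>0 < k\<close> by (auto simp: q_def q'_def)
    have "A \<epsilon> / ereal q \<le> R (\<epsilon> / k) * ereal (1 / q)"
      using upper[of \<epsilon>] \<epsilon> \<open>0 < q\<close>
      by (auto simp: ereal_divide_eq_mult_inverse[symmetric] intro: ereal_divide_right_mono)
    also have "\<dots> \<le> R (\<epsilon> / k) * ereal (c / q')"
      using ratio R_nonneg[of "\<epsilon> / k"] \<epsilon> \<open>0 < k\<close> \<open>0 < q\<close> \<open>0 < q'\<close>
      by (intro ereal_mult_left_mono) (auto simp: q_def q'_def field_simps)
    also have "\<dots> = R (\<epsilon> / k) / ereal q' * ereal c"
      using \<open>0 < q'\<close> by (simp add: ereal_divide_eq_mult_inverse mult.assoc)
    finally show "A \<epsilon> / ereal (ln (1 / \<epsilon>)) \<le> R (\<epsilon> / k) / ereal (ln (1 / (\<epsilon> / k))) * ereal c"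
      by (simp add: q_def q'_def)
  qed
qed

lemma Limsup_divide_ln_inverse_eq:
  fixes A R :: "real \<Rightarrow> ereal"
  assumes R_nonneg: "\<And>\<epsilon>. 0 < \<epsilon> \<Longrightarrow> 0 \<le> R \<epsilon>"
    and lower: "\<And>\<epsilon>. 0 < \<epsilon> \<Longrightarrow> R \<epsilon> \<le> A \<epsilon>"
    and upper: "\<And>\<epsilon>. 0 < \<epsilon> \<Longrightarrow> A \<epsilon> \<le> R (\<epsilon> / k)"
    and "0 < k"
  shows "Limsup (at_right 0) (\<lambda>\<epsilon>. A \<epsilon> / ereal (ln (1 / \<epsilon>)))
       = Limsup (at_right 0) (\<lambda>\<epsilon>. R \<epsilon> / ereal (ln (1 / \<epsilon>)))"
    (is "Limsup _ ?A = Limsup _ ?h")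
proof (rule antisym)
  have "0 \<le> Limsup (at_right 0) ?h"
    using eventually_divide_ln_inverse_mono[of "\<lambda>_. 0" R] R_nonneg by (intro le_Limsup) auto
  then show "Limsup (at_right 0) ?A \<le> Limsup (at_right 0) ?h"
  proof (rule ereal_le_if_le_mult_gt_one[rotated])
    fix c :: real
    assume "1 < c"
    have "Limsup (at_right 0) ?A \<le> Limsup (at_right 0) (\<lambda>\<epsilon>. ?h (\<epsilon> / k) * ereal c)"
      using eventually_divide_ln_inverse_le_rescaled[where A = A and R = R, OF R_nonneg upper \<open>0 < k\<close> \<open>1 < c\<close>]
      by (rule Limsup_mono)
    also have "\<dots> = Limsup (at_right 0) (\<lambda>\<epsilon>. ?h (\<epsilon> / k)) * ereal c"
      using \<open>1 < c\<close> by (intro Limsup_ereal_mult_right) auto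
    also have "Limsup (at_right 0) (\<lambda>\<epsilon>. ?h (\<epsilon> / k)) = Limsup (at_right 0) ?h"
      using \<open>0 < k\<close> by (rule Limsup_at_right_0_rescale)
    finally show "Limsup (at_right 0) ?A \<le> Limsup (at_right 0) ?h * ereal c" .
  qed
  show "Limsup (at_right 0) ?h \<le> Limsup (at_right 0) ?A"
    using eventually_divide_ln_inverse_mono[OF lower] by (rule Limsup_mono)
qed

lemma Liminf_divide_ln_inverse_eq:
  fixes A R :: "real \<Rightarrow> ereal"
  assumes R_nonneg: "\<And>\<epsilon>. 0 < \<epsilon> \<Longrightarrow> 0 \<le> R \<epsilon>"
    and lower: "\<And>\<epsilon>. 0 < \<epsilon> \<Longrightarrow> R \<epsilon> \<le> A \<epsilon>"
    and upper: "\<And>\<epsilon>. 0 < \<epsilon> \<Longrightarrow> A \<epsilon> \<le> R (\<epsilon> / k)"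
    and "0 < k"
  shows "Liminf (at_right 0) (\<lambda>\<epsilon>. A \<epsilon> / ereal (ln (1 / \<epsilon>)))
       = Liminf (at_right 0) (\<lambda>\<epsilon>. R \<epsilon> / ereal (ln (1 / \<epsilon>)))"
    (is "Liminf _ ?A = Liminf _ ?h")
proof (rule antisym)
  have "0 \<le> Liminf (at_right 0) ?h"
    using eventually_divide_ln_inverse_mono[of "\<lambda>_. 0" R] R_nonneg by (intro Liminf_bounded) auto
  then show "Liminf (at_right 0) ?A \<le> Liminf (at_right 0) ?h"
  proof (rule ereal_le_if_le_mult_gt_one[rotated])
    fix c :: real
    assume "1 < c"
    have "Liminf (at_right 0) ?A \<le> Liminf (at_right 0) (\<lambda>\<epsilon>. ?h (\<epsilon> / k) * ereal c)"
      using eventually_divide_ln_inverse_le_rescaled[where A = A and R = R, OF R_nonneg upper \<open>0 < k\<close> \<open>1 < c\<close>]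
      by (rule Liminf_mono)
    also have "\<dots> = Liminf (at_right 0) (\<lambda>\<epsilon>. ?h (\<epsilon> / k)) * ereal c"
      using \<open>1 < c\<close> by (intro Liminf_ereal_mult_right) auto
    also have "Liminf (at_right 0) (\<lambda>\<epsilon>. ?h (\<epsilon> / k)) = Liminf (at_right 0) ?h"
      using \<open>0 < k\<close> by (rule Liminf_at_right_0_rescale)
    finally show "Liminf (at_right 0) ?A \<le> Liminf (at_right 0) ?h * ereal c" .
  qed
  show "Liminf (at_right 0) ?h \<le> Liminf (at_right 0) ?A"
    using eventually_divide_ln_inverse_mono[OF lower] by (rule Liminf_mono)
qed

lemma Limsup_growth_rate_mono:
  fixes f g :: "real \<Rightarrow> nat"
  assumes "\<And>t. 0 \<le> t \<Longrightarrow> f t \<le> g t"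
  shows "Limsup at_top (\<lambda>t. ereal (ln (real (f t)) / t)) \<le> Limsup at_top (\<lambda>t. ereal (ln (real (g t)) / t))"
  using eventually_gt_at_top[of "0::real"]
proof (intro Limsup_mono, eventually_elim)
  fix t :: real
  assume "0 < t"
  then show "ereal (ln (real (f t)) / t) \<le> ereal (ln (real (g t)) / t)"
    using assms[of t] by (auto intro: divide_right_mono ln_real_nat_mono)
qed

lemma Limsup_ereal_divide_mult_const:
  fixes f :: "real \<Rightarrow> real"
  assumes "0 < q"
  shows "Limsup at_top (\<lambda>t. ereal (f t / (t * q))) = Limsup at_top (\<lambda>t. ereal (f t / t)) / ereal q"
proof -
  have "(\<lambda>t. ereal (f t / (t * q))) = (\<lambda>t. ereal (f t / t) * ereal (1 / q))"
    by (simp add: fun_eq_iff)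
  then have "Limsup at_top (\<lambda>t. ereal (f t / (t * q))) = Limsup at_top (\<lambda>t. ereal (f t / t) * ereal (1 / q))"
    by (rule arg_cong)
  also have "\<dots> = Limsup at_top (\<lambda>t. ereal (f t / t)) * ereal (1 / q)"
    using assms by (intro Limsup_ereal_mult_right) auto
  also have "\<dots> = Limsup at_top (\<lambda>t. ereal (f t / t)) / ereal q"
    using assms by (intro ereal_divide_eq_mult_inverse[symmetric]) simp
  finally show ?thesis .
qed

lemma Lim_divide_mult_const:
  fixes f :: "real \<Rightarrow> real"
  assumes "((\<lambda>t. f t / t) \<longlongrightarrow> L) at_top" "q \<noteq> 0"
  shows "Lim at_top (\<lambda>t. f t / (t * q)) = L / q"
  using tendsto_divide[OF assms(1) tendsto_const assms(2)]
  by (intro tendsto_Lim) (auto simp: divide_divide_eq_left)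

section \<open>The Bowen distance\<close>

lemma bowen_dist_le:
  assumes "0 \<le> t" "\<And>s. s \<in> {0..t} \<Longrightarrow> dist (\<phi> x s) (\<phi> y s) \<le> c"
  shows "bowen_dist \<phi> t x y \<le> c"
  unfolding bowen_dist_def using assms by (intro cSUP_least) auto

lemma bowen_dist_commute: "bowen_dist \<phi> t x y = bowen_dist \<phi> t y x"
  unfolding bowen_dist_def by (simp add: dist_commute)

lemma bowen_dist_self: "0 \<le> t \<Longrightarrow> bowen_dist \<phi> t x x = 0"
  unfolding bowen_dist_def by simp

lemma bowen_diam_le:
  "(\<And>x y. x \<in> U \<Longrightarrow> y \<in> U \<Longrightarrow> ereal (bowen_dist \<phi> t x y) \<le> c) \<Longrightarrow> bowen_diam \<phi> t U \<le> c"
  unfolding bowen_diam_def by (rule SUP_least) auto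

lemma bowen_dist_le_diam: "x \<in> U \<Longrightarrow> y \<in> U \<Longrightarrow> ereal (bowen_dist \<phi> t x y) \<le> bowen_diam \<phi> t U"
  unfolding bowen_diam_def by (rule SUP_upper2[of "(x, y)"]) auto

locale compact_flow =
  fixes X :: "'a::metric_space set" and \<phi> :: "'a \<Rightarrow> real \<Rightarrow> 'a"
  assumes compact: "compact X" and flow: "flow X \<phi>"
begin

lemma flow_in: "x \<in> X \<Longrightarrow> \<phi> x t \<in> X"
  using flow by (auto simp: flow_def)

lemma flow_add: "x \<in> X \<Longrightarrow> \<phi> x (t + s) = \<phi> (\<phi> x s) t"
  using flow by (auto simp: flow_def)

lemma continuous_on_flow: "continuous_on (X \<times> UNIV) (\<lambda>(x, t). \<phi> x t)"
  using flow by (auto simp: flow_def)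

lemma continuous_on_flow_time:
  assumes "x \<in> X"
  shows "continuous_on UNIV (\<phi> x)"
proof -
  have "continuous_on UNIV (\<lambda>s. (\<lambda>(x, t). \<phi> x t) (x, s))"
    by (rule continuous_on_compose2[OF continuous_on_flow]) (use assms in \<open>auto intro!: continuous_intros\<close>)
  then show ?thesis
    by simp
qed

lemma continuous_on_flow_space: "continuous_on X (\<lambda>x. \<phi> x t)"
proof -
  have "continuous_on X (\<lambda>x. (\<lambda>(x, t). \<phi> x t) (x, t))"
    by (rule continuous_on_compose2[OF continuous_on_flow]) (auto intro!: continuous_intros)
  then show ?thesis
    by simp
qed

lemma openin_flow_preimage:
  assumes "openin (top_of_set X) B"
  shows "openin (top_of_set X) {x\<in>X. \<phi> x t \<in> B}"
proof -
  have "openin (top_of_set X) (X \<inter> (\<lambda>x. \<phi> x t) -` B)"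
    using assms flow_in by (intro continuous_openin_preimage[OF continuous_on_flow_space]) auto
  moreover have "{x\<in>X. \<phi> x t \<in> B} = X \<inter> (\<lambda>x. \<phi> x t) -` B"
    by auto
  ultimately show ?thesis
    by simp
qed

lemma dist_le_bowen_dist:
  assumes "x \<in> X" "y \<in> X" "s \<in> {0..t}"
  shows "dist (\<phi> x s) (\<phi> y s) \<le> bowen_dist \<phi> t x y"
proof -
  have "continuous_on {0..t} (\<lambda>s. dist (\<phi> x s) (\<phi> y s))"
    using assms continuous_on_flow_time
    by (intro continuous_intros) (auto intro: continuous_on_subset)
  then have "bdd_above ((\<lambda>s. dist (\<phi> x s) (\<phi> y s)) ` {0..t})"
    by (intro bounded_imp_bdd_above compact_imp_bounded compact_continuous_image) auto
  then show ?thesis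
    unfolding bowen_dist_def using assms(3) by (rule cSUP_upper2) simp
qed

lemma bowen_dist_triangle:
  assumes "x \<in> X" "y \<in> X" "z \<in> X" "0 \<le> t"
  shows "bowen_dist \<phi> t x z \<le> bowen_dist \<phi> t x y + bowen_dist \<phi> t y z"
proof (rule bowen_dist_le[OF \<open>0 \<le> t\<close>])
  fix s
  assume s: "s \<in> {0..t}"
  have "dist (\<phi> x s) (\<phi> z s) \<le> dist (\<phi> x s) (\<phi> y s) + dist (\<phi> y s) (\<phi> z s)"
    by (rule dist_triangle)
  also have "\<dots> \<le> bowen_dist \<phi> t x y + bowen_dist \<phi> t y z"
    using assms s by (intro add_mono dist_le_bowen_dist)
  finally show "dist (\<phi> x s) (\<phi> z s) \<le> bowen_dist \<phi> t x y + bowen_dist \<phi> t y z" .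
qed

lemma bowen_dist_mono:
  "x \<in> X \<Longrightarrow> y \<in> X \<Longrightarrow> 0 \<le> t \<Longrightarrow> t \<le> t' \<Longrightarrow> bowen_dist \<phi> t x y \<le> bowen_dist \<phi> t' x y"
  by (intro bowen_dist_le dist_le_bowen_dist) auto

lemma bowen_dist_add_le_max:
  assumes "x \<in> X" "y \<in> X" "0 \<le> t" "0 \<le> s"
  shows "bowen_dist \<phi> (t + s) x y \<le> max (bowen_dist \<phi> t x y) (bowen_dist \<phi> s (\<phi> x t) (\<phi> y t))"
proof (rule bowen_dist_le)
  fix r
  assume r: "r \<in> {0..t + s}"
  show "dist (\<phi> x r) (\<phi> y r) \<le> max (bowen_dist \<phi> t x y) (bowen_dist \<phi> s (\<phi> x t) (\<phi> y t))"
  proof (cases "r \<le> t")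
    case True
    then show ?thesis
      using dist_le_bowen_dist[OF assms(1,2), of r t] r by auto
  next
    case False
    have "dist (\<phi> (\<phi> x t) (r - t)) (\<phi> (\<phi> y t) (r - t)) \<le> bowen_dist \<phi> s (\<phi> x t) (\<phi> y t)"
      using False r assms by (intro dist_le_bowen_dist flow_in) auto
    then show ?thesis
      using flow_add[OF assms(1), of "r - t" t] flow_add[OF assms(2), of "r - t" t] by auto
  qed
qed (use assms in auto)

lemma bowen_dist_small:
  assumes "0 \<le> t" "0 < \<eta>"
  obtains \<delta> where "0 < \<delta>" "\<And>x y. x \<in> X \<Longrightarrow> y \<in> X \<Longrightarrow> dist x y < \<delta> \<Longrightarrow> bowen_dist \<phi> t x y \<le> \<eta>"
proof -
  have "uniformly_continuous_on (X \<times> {0..t}) (\<lambda>(x, t). \<phi> x t)"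
    using continuous_on_flow compact
    by (intro compact_uniformly_continuous compact_Times) (auto intro: continuous_on_subset)
  then obtain \<delta> where "0 < \<delta>" and \<delta>:
    "\<And>p p'. p \<in> X \<times> {0..t} \<Longrightarrow> p' \<in> X \<times> {0..t} \<Longrightarrow> dist p' p < \<delta> \<Longrightarrow>
       dist ((\<lambda>(x, t). \<phi> x t) p') ((\<lambda>(x, t). \<phi> x t) p) < \<eta>"
    using \<open>0 < \<eta>\<close> unfolding uniformly_continuous_on_def by metis
  have "bowen_dist \<phi> t x y \<le> \<eta>" if "x \<in> X" "y \<in> X" "dist x y < \<delta>" for x y
  proof (rule bowen_dist_le[OF \<open>0 \<le> t\<close>])
    fix s
    assume "s \<in> {0..t}"
    then show "dist (\<phi> x s) (\<phi> y s) \<le> \<eta>"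
      using \<delta>[of "(y, s)" "(x, s)"] that by (auto simp: dist_Pair_Pair dist_commute)
  qed
  with \<open>0 < \<delta>\<close> show ?thesis
    using that by blast
qed

lemma openin_bowen_ball:
  assumes "0 \<le> t" "y \<in> X"
  shows "openin (top_of_set X) {x\<in>X. bowen_dist \<phi> t x y < r}"
  unfolding openin_euclidean_subtopology_iff
proof (intro conjI ballI)
  fix x0
  assume x0: "x0 \<in> {x\<in>X. bowen_dist \<phi> t x y < r}"
  obtain \<delta> where "0 < \<delta>" and \<delta>:
    "\<And>x x'. x \<in> X \<Longrightarrow> x' \<in> X \<Longrightarrow> dist x x' < \<delta> \<Longrightarrow> bowen_dist \<phi> t x x' \<le> (r - bowen_dist \<phi> t x0 y) / 2"
    using bowen_dist_small[OF \<open>0 \<le> t\<close>, of "(r - bowen_dist \<phi> t x0 y) / 2"] x0 by auto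
  have "bowen_dist \<phi> t x y < r" if "x \<in> X" "dist x x0 < \<delta>" for x
  proof -
    have "bowen_dist \<phi> t x y \<le> bowen_dist \<phi> t x x0 + bowen_dist \<phi> t x0 y"
      using that x0 assms by (intro bowen_dist_triangle) auto
    then show ?thesis
      using \<delta>[of x x0] that x0 by auto
  qed
  with \<open>0 < \<delta>\<close> show "\<exists>e>0. \<forall>x\<in>X. dist x x0 < e \<longrightarrow> x \<in> {x\<in>X. bowen_dist \<phi> t x y < r}"
    by auto
qed auto

lemma bowen_diam_mono:
  assumes "U \<subseteq> X" "0 \<le> t" "t \<le> t'"
  shows "bowen_diam \<phi> t U \<le> bowen_diam \<phi> t' U"
proof (rule bowen_diam_le)
  fix x y
  assume "x \<in> U" "y \<in> U"
  then have "ereal (bowen_dist \<phi> t x y) \<le> ereal (bowen_dist \<phi> t' x y)"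
    using assms by (auto intro: bowen_dist_mono)
  also have "\<dots> \<le> bowen_diam \<phi> t' U"
    using \<open>x \<in> U\<close> \<open>y \<in> U\<close> by (rule bowen_dist_le_diam)
  finally show "ereal (bowen_dist \<phi> t x y) \<le> bowen_diam \<phi> t' U" .
qed

lemma bowen_diam_refine_le_max:
  assumes "A \<subseteq> X" "0 \<le> t" "0 \<le> s"
  shows "bowen_diam \<phi> (t + s) (A \<inter> {x\<in>X. \<phi> x t \<in> B}) \<le> max (bowen_diam \<phi> t A) (bowen_diam \<phi> s B)"
proof (rule bowen_diam_le)
  fix x y
  assume xy: "x \<in> A \<inter> {x\<in>X. \<phi> x t \<in> B}" "y \<in> A \<inter> {x\<in>X. \<phi> x t \<in> B}"
  have "ereal (bowen_dist \<phi> (t + s) x y)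
      \<le> max (ereal (bowen_dist \<phi> t x y)) (ereal (bowen_dist \<phi> s (\<phi> x t) (\<phi> y t)))"
    using xy assms bowen_dist_add_le_max[of x y t s] by (auto simp: max_def)
  also have "\<dots> \<le> max (bowen_diam \<phi> t A) (bowen_diam \<phi> s B)"
    using xy by (intro max.mono bowen_dist_le_diam) auto
  finally show "ereal (bowen_dist \<phi> (t + s) x y) \<le> max (bowen_diam \<phi> t A) (bowen_diam \<phi> s B)" .
qed

section \<open>Spanning, separated and covering numbers\<close>

definition spanning_set :: "real \<Rightarrow> real \<Rightarrow> 'a set \<Rightarrow> bool" where
  "spanning_set t \<epsilon> E \<longleftrightarrow> finite E \<and> E \<subseteq> X \<and> (\<forall>x\<in>X. \<exists>y\<in>E. bowen_dist \<phi> t x y < \<epsilon>)"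

definition separated_set :: "real \<Rightarrow> real \<Rightarrow> 'a set \<Rightarrow> bool" where
  "separated_set t \<epsilon> F \<longleftrightarrow> finite F \<and> F \<subseteq> X \<and>
     (\<forall>x\<in>F. \<forall>y\<in>F. x \<noteq> y \<longrightarrow> \<epsilon> \<le> bowen_dist \<phi> t x y)"

definition bowen_cover :: "real \<Rightarrow> real \<Rightarrow> 'a set set \<Rightarrow> bool" where
  "bowen_cover t \<epsilon> \<U> \<longleftrightarrow> finite \<U> \<and> (\<forall>U\<in>\<U>. openin (top_of_set X) U) \<and> X \<subseteq> \<Union>\<U> \<and>
     (\<forall>U\<in>\<U>. bowen_diam \<phi> t U < ereal \<epsilon>)"

lemma span_num_eq_Inf: "span_num \<phi> X t \<epsilon> = Inf (card ` Collect (spanning_set t \<epsilon>))"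
  unfolding span_num_def spanning_set_def by (rule arg_cong[where f = Inf]) auto

lemma sep_num_eq_Sup: "sep_num \<phi> X t \<epsilon> = Sup (card ` Collect (separated_set t \<epsilon>))"
  unfolding sep_num_def separated_set_def by (rule arg_cong[where f = Sup]) auto

lemma cover_num_eq_Inf: "cover_num \<phi> X t \<epsilon> = Inf (card ` Collect (bowen_cover t \<epsilon>))"
  unfolding cover_num_def bowen_cover_def by (rule arg_cong[where f = Inf]) auto

lemma spanning_set_exists:
  assumes "0 \<le> t" "0 < \<epsilon>"
  obtains E where "spanning_set t \<epsilon> E"
proof -
  obtain \<delta> where "0 < \<delta>" and \<delta>:
    "\<And>x y. x \<in> X \<Longrightarrow> y \<in> X \<Longrightarrow> dist x y < \<delta> \<Longrightarrow> bowen_dist \<phi> t x y \<le> \<epsilon> / 2"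
    using bowen_dist_small[OF \<open>0 \<le> t\<close>, of "\<epsilon> / 2"] \<open>0 < \<epsilon>\<close> by auto
  obtain E where E: "finite E" "E \<subseteq> X" "X \<subseteq> (\<Union>y\<in>E. ball y \<delta>)"
    using seq_compact_imp_totally_bounded[OF compact_imp_seq_compact[OF compact]] \<open>0 < \<delta>\<close> by metis
  have "\<exists>y\<in>E. bowen_dist \<phi> t x y < \<epsilon>" if "x \<in> X" for x
  proof -
    obtain y where "y \<in> E" "dist y x < \<delta>"
      using E(3) \<open>x \<in> X\<close> by auto
    then have "bowen_dist \<phi> t x y \<le> \<epsilon> / 2"
      using \<delta>[of x y] E(2) \<open>x \<in> X\<close> by (auto simp: dist_commute)
    with \<open>y \<in> E\<close> \<open>0 < \<epsilon>\<close> show ?thesis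
      by (intro bexI[of _ y]) auto
  qed
  with E(1,2) have "spanning_set t \<epsilon> E"
    by (simp add: spanning_set_def)
  then show ?thesis
    by (rule that)
qed

lemma span_num_le_card: "spanning_set t \<epsilon> E \<Longrightarrow> span_num \<phi> X t \<epsilon> \<le> card E"
  unfolding span_num_eq_Inf by (rule cInf_lower) auto

lemma span_num_attained:
  assumes "0 \<le> t" "0 < \<epsilon>"
  obtains E where "spanning_set t \<epsilon> E" "card E = span_num \<phi> X t \<epsilon>"
proof -
  obtain E0 where "spanning_set t \<epsilon> E0"
    using spanning_set_exists[OF assms] .
  then have "card ` Collect (spanning_set t \<epsilon>) \<noteq> {}"
    by blast
  from Inf_nat_def1[OF this] obtain E
    where "spanning_set t \<epsilon> E" "card E = Inf (card ` Collect (spanning_set t \<epsilon>))"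
    by auto
  then show ?thesis
    by (intro that[of E]) (simp_all add: span_num_eq_Inf)
qed

lemma span_num_antimono:
  assumes "0 \<le> t" "0 < \<epsilon>" "\<epsilon> \<le> \<epsilon>'"
  shows "span_num \<phi> X t \<epsilon>' \<le> span_num \<phi> X t \<epsilon>"
proof -
  obtain E where E: "spanning_set t \<epsilon> E" "card E = span_num \<phi> X t \<epsilon>"
    using span_num_attained[OF assms(1,2)] .
  then have "spanning_set t \<epsilon>' E"
    using \<open>\<epsilon> \<le> \<epsilon>'\<close> unfolding spanning_set_def by (fastforce intro: less_le_trans)
  then show ?thesis
    using span_num_le_card E(2) by metis
qed

text \<open>Distinct points of an \<open>\<epsilon>\<close>-separated set cannot be \<open>\<epsilon>/2\<close>-close to a common point.\<close>

lemma card_separated_le_span_num: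
  assumes "0 \<le> t" "0 < \<epsilon>" and F: "separated_set t \<epsilon> F"
  shows "card F \<le> span_num \<phi> X t (\<epsilon> / 2)"
proof -
  obtain E where E: "spanning_set t (\<epsilon> / 2) E" "card E = span_num \<phi> X t (\<epsilon> / 2)"
    using span_num_attained[OF assms(1), of "\<epsilon> / 2"] \<open>0 < \<epsilon>\<close> by auto
  have "\<forall>x\<in>F. \<exists>y. y \<in> E \<and> bowen_dist \<phi> t x y < \<epsilon> / 2"
    using E(1) F by (auto simp: spanning_set_def separated_set_def)
  then obtain g where g: "\<And>x. x \<in> F \<Longrightarrow> g x \<in> E \<and> bowen_dist \<phi> t x (g x) < \<epsilon> / 2"
    by metis
  have "inj_on g F"
  proof (rule inj_onI, rule ccontr)
    fix x x'
    assume xx': "x \<in> F" "x' \<in> F" "g x = g x'" "x \<noteq> x'"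
    have X: "x \<in> X" "x' \<in> X" "g x \<in> X"
      using xx' F E(1) g[of x] by (auto simp: separated_set_def spanning_set_def)
    have "bowen_dist \<phi> t x x' \<le> bowen_dist \<phi> t x (g x) + bowen_dist \<phi> t (g x) x'"
      using X \<open>0 \<le> t\<close> by (intro bowen_dist_triangle)
    also have "\<dots> < \<epsilon>"
      using g[of x] g[of x'] xx' bowen_dist_commute[of \<phi> t "g x" x'] by auto
    finally show False
      using F xx' unfolding separated_set_def by fastforce
  qed
  then have "card F \<le> card E"
    using g E(1) by (intro card_inj_on_le) (auto simp: spanning_set_def)
  then show ?thesis
    using E(2) by simp
qed

lemma finite_card_separated_sets:
  assumes "0 \<le> t" "0 < \<epsilon>"
  shows "finite (card ` Collect (separated_set t \<epsilon>))"
proof (rule finite_subset)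
  show "card ` Collect (separated_set t \<epsilon>) \<subseteq> {..span_num \<phi> X t (\<epsilon> / 2)}"
    using card_separated_le_span_num[OF assms] by blast
qed simp

lemma card_separated_le_sep_num:
  assumes "0 \<le> t" "0 < \<epsilon>" "separated_set t \<epsilon> F"
  shows "card F \<le> sep_num \<phi> X t \<epsilon>"
  unfolding sep_num_eq_Sup using finite_card_separated_sets[OF assms(1,2)] assms(3)
  by (intro le_cSup_finite) auto

lemma sep_num_attained:
  assumes "0 \<le> t" "0 < \<epsilon>"
  obtains F where "separated_set t \<epsilon> F" "card F = sep_num \<phi> X t \<epsilon>"
proof -
  have "separated_set t \<epsilon> {}"
    by (simp add: separated_set_def)
  then have ne: "card ` Collect (separated_set t \<epsilon>) \<noteq> {}"
    by blast
  have "Max (card ` Collect (separated_set t \<epsilon>)) \<in> card ` Collect (separated_set t \<epsilon>)"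
    using finite_card_separated_sets[OF assms] ne by (rule Max_in)
  then obtain F where "separated_set t \<epsilon> F" "card F = Max (card ` Collect (separated_set t \<epsilon>))"
    by auto
  moreover have "sep_num \<phi> X t \<epsilon> = Max (card ` Collect (separated_set t \<epsilon>))"
    unfolding sep_num_eq_Sup Sup_nat_def by (rule if_not_P[OF ne])
  ultimately show ?thesis
    by (intro that[of F]) simp_all
qed

lemma sep_num_le_span_num:
  assumes "0 \<le> t" "0 < \<epsilon>"
  shows "sep_num \<phi> X t \<epsilon> \<le> span_num \<phi> X t (\<epsilon> / 2)"
  using sep_num_attained[OF assms] card_separated_le_span_num[OF assms] by metis

text \<open>A maximal separated set is spanning.\<close>

lemma span_num_le_sep_num:
  assumes "0 \<le> t" "0 < \<epsilon>"
  shows "span_num \<phi> X t \<epsilon> \<le> sep_num \<phi> X t \<epsilon>"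
proof -
  obtain F where F: "separated_set t \<epsilon> F" "card F = sep_num \<phi> X t \<epsilon>"
    using sep_num_attained[OF assms] .
  have "\<exists>y\<in>F. bowen_dist \<phi> t x y < \<epsilon>" if "x \<in> X" for x
  proof (rule ccontr)
    assume far: "\<not> (\<exists>y\<in>F. bowen_dist \<phi> t x y < \<epsilon>)"
    then have "x \<notin> F"
      using bowen_dist_self[OF \<open>0 \<le> t\<close>, of \<phi> x] \<open>0 < \<epsilon>\<close> by force
    have "\<epsilon> \<le> bowen_dist \<phi> t x y" "\<epsilon> \<le> bowen_dist \<phi> t y x" if "y \<in> F" for y
      using far that bowen_dist_commute[of \<phi> t x y] by auto
    then have "separated_set t \<epsilon> (insert x F)"
      using F(1) \<open>x \<in> X\<close> unfolding separated_set_def by auto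
    then have "card (insert x F) \<le> card F"
      using card_separated_le_sep_num[OF assms] F(2) by simp
    with \<open>x \<notin> F\<close> F(1) show False
      by (simp add: separated_set_def)
  qed
  then have "spanning_set t \<epsilon> F"
    using F(1) by (simp add: spanning_set_def separated_set_def)
  then show ?thesis
    using span_num_le_card F(2) by metis
qed

lemma bowen_coverI:
  assumes "finite \<U>" "\<And>U. U \<in> \<U> \<Longrightarrow> openin (top_of_set X) U" "X \<subseteq> \<Union>\<U>"
    "\<And>U. U \<in> \<U> \<Longrightarrow> bowen_diam \<phi> t U < ereal \<epsilon>"
  shows "bowen_cover t \<epsilon> \<U>"
  using assms unfolding bowen_cover_def by blast

lemma bowen_coverD:
  assumes "bowen_cover t \<epsilon> \<U>"
  shows "finite \<U>" "\<And>U. U \<in> \<U> \<Longrightarrow> openin (top_of_set X) U" "X \<subseteq> \<Union>\<U>"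
    "\<And>U. U \<in> \<U> \<Longrightarrow> bowen_diam \<phi> t U < ereal \<epsilon>" "\<And>U. U \<in> \<U> \<Longrightarrow> U \<subseteq> X"
  using assms openin_imp_subset unfolding bowen_cover_def by blast+

lemma bowen_cover_of_spanning_set:
  assumes "0 \<le> t" "0 < \<epsilon>" and E: "spanning_set t \<epsilon> E"
  shows "bowen_cover t (3 * \<epsilon>) ((\<lambda>y. {x\<in>X. bowen_dist \<phi> t x y < \<epsilon>}) ` E)"
proof (rule bowen_coverI)
  show "finite ((\<lambda>y. {x\<in>X. bowen_dist \<phi> t x y < \<epsilon>}) ` E)"
    using E by (simp add: spanning_set_def)
  show "X \<subseteq> \<Union> ((\<lambda>y. {x\<in>X. bowen_dist \<phi> t x y < \<epsilon>}) ` E)"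
    using E unfolding spanning_set_def by blast
  fix U
  assume "U \<in> (\<lambda>y. {x\<in>X. bowen_dist \<phi> t x y < \<epsilon>}) ` E"
  then obtain y where y: "y \<in> E" "U = {x\<in>X. bowen_dist \<phi> t x y < \<epsilon>}"
    by blast
  then have "y \<in> X"
    using E by (auto simp: spanning_set_def)
  then show "openin (top_of_set X) U"
    unfolding y(2) using openin_bowen_ball[OF \<open>0 \<le> t\<close>] by blast
  have "bowen_diam \<phi> t U \<le> ereal (2 * \<epsilon>)"
  proof (rule bowen_diam_le)
    fix p q
    assume "p \<in> U" "q \<in> U"
    then have pq: "p \<in> X" "q \<in> X" "bowen_dist \<phi> t p y < \<epsilon>" "bowen_dist \<phi> t q y < \<epsilon>"
      using y(2) by auto
    have "bowen_dist \<phi> t p q \<le> bowen_dist \<phi> t p y + bowen_dist \<phi> t y q"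
      using pq \<open>y \<in> X\<close> \<open>0 \<le> t\<close> by (intro bowen_dist_triangle)
    then show "ereal (bowen_dist \<phi> t p q) \<le> ereal (2 * \<epsilon>)"
      using pq bowen_dist_commute[of \<phi> t y q] by simp
  qed
  also have "\<dots> < ereal (3 * \<epsilon>)"
    using \<open>0 < \<epsilon>\<close> by simp
  finally show "bowen_diam \<phi> t U < ereal (3 * \<epsilon>)" .
qed

lemma cover_num_le_card: "bowen_cover t \<epsilon> \<U> \<Longrightarrow> cover_num \<phi> X t \<epsilon> \<le> card \<U>"
  unfolding cover_num_eq_Inf by (rule cInf_lower) auto

lemma cover_num_le_span_num:
  assumes "0 \<le> t" "0 < \<epsilon>"
  shows "cover_num \<phi> X t (3 * \<epsilon>) \<le> span_num \<phi> X t \<epsilon>"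
proof -
  obtain E where E: "spanning_set t \<epsilon> E" "card E = span_num \<phi> X t \<epsilon>"
    using span_num_attained[OF assms] .
  have "cover_num \<phi> X t (3 * \<epsilon>) \<le> card ((\<lambda>y. {x\<in>X. bowen_dist \<phi> t x y < \<epsilon>}) ` E)"
    by (rule cover_num_le_card[OF bowen_cover_of_spanning_set[OF assms E(1)]])
  also have "\<dots> \<le> card E"
    using E(1) by (intro card_image_le) (simp add: spanning_set_def)
  finally show ?thesis
    using E(2) by simp
qed

lemma cover_num_attained:
  assumes "0 \<le> t" "0 < \<epsilon>"
  obtains \<U> where "bowen_cover t \<epsilon> \<U>" "card \<U> = cover_num \<phi> X t \<epsilon>"
proof -
  obtain E where "spanning_set t (\<epsilon> / 3) E"
    using spanning_set_exists[OF assms(1), of "\<epsilon> / 3"] \<open>0 < \<epsilon>\<close> by auto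
  then have "bowen_cover t (3 * (\<epsilon> / 3)) ((\<lambda>y. {x\<in>X. bowen_dist \<phi> t x y < \<epsilon> / 3}) ` E)"
    using assms by (intro bowen_cover_of_spanning_set) auto
  then have "card ` Collect (bowen_cover t \<epsilon>) \<noteq> {}"
    by simp blast
  from Inf_nat_def1[OF this] obtain \<U>
    where "bowen_cover t \<epsilon> \<U>" "card \<U> = Inf (card ` Collect (bowen_cover t \<epsilon>))"
    by auto
  then show ?thesis
    by (intro that[of \<U>]) (simp_all add: cover_num_eq_Inf)
qed

text \<open>Choosing a point in each nonempty member of a cover gives a spanning set.\<close>

lemma span_num_le_cover_num:
  assumes "0 \<le> t" "0 < \<epsilon>"
  shows "span_num \<phi> X t \<epsilon> \<le> cover_num \<phi> X t \<epsilon>"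
proof -
  obtain \<U> where \<U>: "bowen_cover t \<epsilon> \<U>" "card \<U> = cover_num \<phi> X t \<epsilon>"
    using cover_num_attained[OF assms] .
  define E where "E = (\<lambda>U. SOME x. x \<in> U) ` {U\<in>\<U>. U \<noteq> {}}"
  have some_in: "(SOME x. x \<in> U) \<in> U" if "U \<noteq> {}" for U :: "'a set"
    using that by (simp add: some_in_eq)
  have "spanning_set t \<epsilon> E"
    unfolding spanning_set_def
  proof (intro conjI ballI)
    show "finite E"
      using bowen_coverD(1)[OF \<U>(1)] by (simp add: E_def)
    show "E \<subseteq> X"
      using bowen_coverD(5)[OF \<U>(1)] some_in unfolding E_def by blast
    fix x
    assume "x \<in> X"
    then obtain U where U: "U \<in> \<U>" "x \<in> U"
      using bowen_coverD(3)[OF \<U>(1)] by blast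
    then have "ereal (bowen_dist \<phi> t x (SOME x. x \<in> U)) \<le> bowen_diam \<phi> t U"
      using some_in[of U] by (intro bowen_dist_le_diam) auto
    also have "\<dots> < ereal \<epsilon>"
      using bowen_coverD(4)[OF \<U>(1) U(1)] .
    finally show "\<exists>y\<in>E. bowen_dist \<phi> t x y < \<epsilon>"
      using U unfolding E_def by auto
  qed
  then have "span_num \<phi> X t \<epsilon> \<le> card E"
    by (rule span_num_le_card)
  also have "\<dots> \<le> card {U\<in>\<U>. U \<noteq> {}}"
    unfolding E_def using bowen_coverD(1)[OF \<U>(1)] by (intro card_image_le) simp
  also have "\<dots> \<le> card \<U>"
    using bowen_coverD(1)[OF \<U>(1)] by (intro card_mono) auto
  finally show ?thesis
    using \<U>(2) by simp
qed

lemma cover_num_mono: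
  assumes "0 \<le> t" "t \<le> t'" "0 < \<epsilon>"
  shows "cover_num \<phi> X t \<epsilon> \<le> cover_num \<phi> X t' \<epsilon>"
proof -
  obtain \<U> where \<U>: "bowen_cover t' \<epsilon> \<U>" "card \<U> = cover_num \<phi> X t' \<epsilon>"
    using cover_num_attained[of t' \<epsilon>] assms by auto
  have "bowen_diam \<phi> t U < ereal \<epsilon>" if "U \<in> \<U>" for U
    using bowen_diam_mono[OF bowen_coverD(5)[OF \<U>(1) that] assms(1,2)] bowen_coverD(4)[OF \<U>(1) that]
    by (rule le_less_trans)
  then have "bowen_cover t \<epsilon> \<U>"
    using bowen_coverD(1-3)[OF \<U>(1)] by (intro bowen_coverI)
  then show ?thesis
    using cover_num_le_card \<U>(2) by metis
qed

lemma bowen_cover_refine: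
  assumes "0 \<le> t" "0 \<le> s" and \<U>: "bowen_cover t \<epsilon> \<U>" and \<V>: "bowen_cover s \<epsilon> \<V>"
  shows "bowen_cover (t + s) \<epsilon> ((\<lambda>(U, V). U \<inter> {x\<in>X. \<phi> x t \<in> V}) ` (\<U> \<times> \<V>))"
proof (rule bowen_coverI)
  show "finite ((\<lambda>(U, V). U \<inter> {x\<in>X. \<phi> x t \<in> V}) ` (\<U> \<times> \<V>))"
    using bowen_coverD(1)[OF \<U>] bowen_coverD(1)[OF \<V>] by simp
  show "X \<subseteq> \<Union> ((\<lambda>(U, V). U \<inter> {x\<in>X. \<phi> x t \<in> V}) ` (\<U> \<times> \<V>))"
  proof
    fix x
    assume "x \<in> X"
    then obtain U V where "U \<in> \<U>" "x \<in> U" "V \<in> \<V>" "\<phi> x t \<in> V"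
      using bowen_coverD(3)[OF \<U>] bowen_coverD(3)[OF \<V>] flow_in[OF \<open>x \<in> X\<close>] by blast
    then have "U \<inter> {x\<in>X. \<phi> x t \<in> V} \<in> (\<lambda>(U, V). U \<inter> {x\<in>X. \<phi> x t \<in> V}) ` (\<U> \<times> \<V>)"
      and "x \<in> U \<inter> {x\<in>X. \<phi> x t \<in> V}"
      using \<open>x \<in> X\<close> by (auto intro: rev_image_eqI[of "(U, V)"])
    then show "x \<in> \<Union> ((\<lambda>(U, V). U \<inter> {x\<in>X. \<phi> x t \<in> V}) ` (\<U> \<times> \<V>))"
      by (rule UnionI)
  qed
  fix W
  assume "W \<in> (\<lambda>(U, V). U \<inter> {x\<in>X. \<phi> x t \<in> V}) ` (\<U> \<times> \<V>)"
  then obtain U V where UV: "U \<in> \<U>" "V \<in> \<V>" "W = U \<inter> {x\<in>X. \<phi> x t \<in> V}"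
    by blast
  show "openin (top_of_set X) W"
    unfolding UV(3) using bowen_coverD(2)[OF \<U> UV(1)] openin_flow_preimage[OF bowen_coverD(2)[OF \<V> UV(2)]]
    by (rule openin_Int)
  have "bowen_diam \<phi> (t + s) W \<le> max (bowen_diam \<phi> t U) (bowen_diam \<phi> s V)"
    unfolding UV(3) using bowen_coverD(5)[OF \<U> UV(1)] assms(1,2) by (rule bowen_diam_refine_le_max)
  also have "\<dots> < ereal \<epsilon>"
    using bowen_coverD(4)[OF \<U> UV(1)] bowen_coverD(4)[OF \<V> UV(2)] by simp
  finally show "bowen_diam \<phi> (t + s) W < ereal \<epsilon>" .
qed

lemma cover_num_add_le_mult:
  assumes "0 \<le> t" "0 \<le> s" "0 < \<epsilon>"
  shows "cover_num \<phi> X (t + s) \<epsilon> \<le> cover_num \<phi> X t \<epsilon> * cover_num \<phi> X s \<epsilon>"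
proof -
  obtain \<U> where \<U>: "bowen_cover t \<epsilon> \<U>" "card \<U> = cover_num \<phi> X t \<epsilon>"
    using cover_num_attained assms by metis
  obtain \<V> where \<V>: "bowen_cover s \<epsilon> \<V>" "card \<V> = cover_num \<phi> X s \<epsilon>"
    using cover_num_attained assms by metis
  have "cover_num \<phi> X (t + s) \<epsilon> \<le> card ((\<lambda>(U, V). U \<inter> {x\<in>X. \<phi> x t \<in> V}) ` (\<U> \<times> \<V>))"
    using bowen_cover_refine[OF assms(1,2) \<U>(1) \<V>(1)] by (rule cover_num_le_card)
  also have "\<dots> \<le> card (\<U> \<times> \<V>)"
    using bowen_coverD(1)[OF \<U>(1)] bowen_coverD(1)[OF \<V>(1)] by (intro card_image_le) simp
  finally show ?thesis
    using \<U>(2) \<V>(2) by (simp add: card_cartesian_product)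
qed

section \<open>Growth rates of the counting numbers\<close>

definition cover_rate :: "real \<Rightarrow> real" where
  "cover_rate \<epsilon> = Lim at_top (\<lambda>t. ln (real (cover_num \<phi> X t \<epsilon>)) / t)"

definition sep_rate :: "real \<Rightarrow> ereal" where
  "sep_rate \<epsilon> = Limsup at_top (\<lambda>t. ereal (ln (real (sep_num \<phi> X t \<epsilon>)) / t))"

lemma cover_rate_tendsto:
  assumes "0 < \<epsilon>"
  shows "((\<lambda>t. ln (real (cover_num \<phi> X t \<epsilon>)) / t) \<longlongrightarrow> cover_rate \<epsilon>) at_top"
proof -
  let ?f = "\<lambda>t. ln (real (cover_num \<phi> X t \<epsilon>))"
  have lim: "((\<lambda>t. ?f t / t) \<longlongrightarrow> (INF t\<in>{0<..}. ?f t / t)) at_top"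
  proof (rule subadditive_tendsto_Inf)
    show "0 \<le> ?f t" for t
      by (rule ln_real_nat_nonneg)
    show "?f s \<le> ?f t" if "0 \<le> s" "s \<le> t" for s t
      using that assms by (intro ln_real_nat_mono cover_num_mono)
    show "?f (s + t) \<le> ?f s + ?f t" if "0 \<le> s" "0 \<le> t" for s t
      using that assms by (intro ln_real_nat_le_add cover_num_add_le_mult)
  qed
  moreover have "cover_rate \<epsilon> = (INF t\<in>{0<..}. ?f t / t)"
    unfolding cover_rate_def using lim by (intro tendsto_Lim) simp_all
  ultimately show ?thesis
    by simp
qed

lemma Limsup_cover_growth_eq:
  assumes "0 < \<epsilon>"
  shows "Limsup at_top (\<lambda>t. ereal (ln (real (cover_num \<phi> X t \<epsilon>)) / t)) = ereal (cover_rate \<epsilon>)"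
  by (rule lim_imp_Limsup) (use cover_rate_tendsto[OF assms] in auto)

lemma span_rate_nonneg: "0 \<le> span_rate \<phi> X \<epsilon>"
  unfolding span_rate_def
proof (rule le_Limsup)
  show "eventually (\<lambda>t. 0 \<le> ereal (ln (real (span_num \<phi> X t \<epsilon>)) / t)) at_top"
    using eventually_gt_at_top[of "0::real"] by eventually_elim (simp add: ln_real_nat_nonneg)
qed simp

lemma span_rate_le_cover_rate:
  assumes "0 < \<epsilon>"
  shows "span_rate \<phi> X \<epsilon> \<le> ereal (cover_rate \<epsilon>)"
  unfolding span_rate_def Limsup_cover_growth_eq[OF assms, symmetric]
  using assms by (intro Limsup_growth_rate_mono span_num_le_cover_num)

lemma cover_rate_le_span_rate:
  assumes "0 < \<epsilon>"
  shows "ereal (cover_rate \<epsilon>) \<le> span_rate \<phi> X (\<epsilon> / 3)"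
proof -
  have "cover_num \<phi> X t \<epsilon> \<le> span_num \<phi> X t (\<epsilon> / 3)" if "0 \<le> t" for t
    using cover_num_le_span_num[of t "\<epsilon> / 3"] that assms by simp
  then show ?thesis
    unfolding span_rate_def Limsup_cover_growth_eq[OF assms, symmetric] by (rule Limsup_growth_rate_mono)
qed

lemma span_rate_le_sep_rate:
  assumes "0 < \<epsilon>"
  shows "span_rate \<phi> X \<epsilon> \<le> sep_rate \<epsilon>"
  unfolding span_rate_def sep_rate_def
  using assms by (intro Limsup_growth_rate_mono span_num_le_sep_num)

lemma sep_rate_le_span_rate:
  assumes "0 < \<epsilon>"
  shows "sep_rate \<epsilon> \<le> span_rate \<phi> X (\<epsilon> / 3)"
proof -
  have "sep_num \<phi> X t \<epsilon> \<le> span_num \<phi> X t (\<epsilon> / 3)" if "0 \<le> t" for t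
    using sep_num_le_span_num[OF that assms] span_num_antimono[OF that, of "\<epsilon> / 3" "\<epsilon> / 2"] assms
    by linarith
  then show ?thesis
    unfolding span_rate_def sep_rate_def by (rule Limsup_growth_rate_mono)
qed

lemma ereal_Lim_cover_growth_divide_ln:
  assumes "0 < \<epsilon>" "\<epsilon> < 1"
  shows "ereal (Lim at_top (\<lambda>t. ln (real (cover_num \<phi> X t \<epsilon>)) / (t * ln (1 / \<epsilon>))))
    = ereal (cover_rate \<epsilon>) / ereal (ln (1 / \<epsilon>))"
proof -
  define q where "q = ln (1 / \<epsilon>)"
  have "0 < q"
    using assms by (simp add: q_def)
  have "Lim at_top (\<lambda>t. ln (real (cover_num \<phi> X t \<epsilon>)) / (t * q)) = cover_rate \<epsilon> / q"
    using assms \<open>0 < q\<close> by (intro Lim_divide_mult_const cover_rate_tendsto) auto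
  with \<open>0 < q\<close> show ?thesis
    unfolding q_def[symmetric] by simp
qed

lemma Limsup_sep_growth_divide_ln:
  assumes "0 < \<epsilon>" "\<epsilon> < 1"
  shows "Limsup at_top (\<lambda>t. ereal (ln (real (sep_num \<phi> X t \<epsilon>)) / (t * ln (1 / \<epsilon>))))
    = sep_rate \<epsilon> / ereal (ln (1 / \<epsilon>))"
  unfolding sep_rate_def using assms by (intro Limsup_ereal_divide_mult_const) simp

lemma upper_mmdim_eq_cover_rate:
  "upper_mmdim \<phi> X = Limsup (at_right 0) (\<lambda>\<epsilon>. ereal (cover_rate \<epsilon>) / ereal (ln (1 / \<epsilon>)))"
  unfolding upper_mmdim_def by (rule Limsup_divide_ln_inverse_eq[where k = 3, symmetric])
    (simp_all add: span_rate_nonneg span_rate_le_cover_rate cover_rate_le_span_rate)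

lemma lower_mmdim_eq_cover_rate:
  "lower_mmdim \<phi> X = Liminf (at_right 0) (\<lambda>\<epsilon>. ereal (cover_rate \<epsilon>) / ereal (ln (1 / \<epsilon>)))"
  unfolding lower_mmdim_def by (rule Liminf_divide_ln_inverse_eq[where k = 3, symmetric])
    (simp_all add: span_rate_nonneg span_rate_le_cover_rate cover_rate_le_span_rate)

lemma upper_mmdim_eq_sep_rate:
  "upper_mmdim \<phi> X = Limsup (at_right 0) (\<lambda>\<epsilon>. sep_rate \<epsilon> / ereal (ln (1 / \<epsilon>)))"
  unfolding upper_mmdim_def by (rule Limsup_divide_ln_inverse_eq[where k = 3, symmetric])
    (simp_all add: span_rate_nonneg span_rate_le_sep_rate sep_rate_le_span_rate)

lemma lower_mmdim_eq_sep_rate: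
  "lower_mmdim \<phi> X = Liminf (at_right 0) (\<lambda>\<epsilon>. sep_rate \<epsilon> / ereal (ln (1 / \<epsilon>)))"
  unfolding lower_mmdim_def by (rule Liminf_divide_ln_inverse_eq[where k = 3, symmetric])
    (simp_all add: span_rate_nonneg span_rate_le_sep_rate sep_rate_le_span_rate)

end

theorem proposition2p3:
  fixes X :: "'a::metric_space set" and \<phi> :: "'a \<Rightarrow> real \<Rightarrow> 'a"
  assumes "compact X" and "flow X \<phi>"
  shows "(\<forall>\<epsilon>>0. \<exists>L. ((\<lambda>t. ln (real (cover_num \<phi> X t \<epsilon>)) / t) \<longlongrightarrow> L) at_top)
    \<and> upper_mmdim \<phi> X =
        Limsup (at_right 0) (\<lambda>\<epsilon>. ereal (Lim at_top (\<lambda>t. ln (real (cover_num \<phi> X t \<epsilon>)) / (t * ln (1 / \<epsilon>)))))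
    \<and> upper_mmdim \<phi> X =
        Limsup (at_right 0) (\<lambda>\<epsilon>. Limsup at_top (\<lambda>t. ereal (ln (real (sep_num \<phi> X t \<epsilon>)) / (t * ln (1 / \<epsilon>)))))
    \<and> lower_mmdim \<phi> X =
        Liminf (at_right 0) (\<lambda>\<epsilon>. ereal (Lim at_top (\<lambda>t. ln (real (cover_num \<phi> X t \<epsilon>)) / (t * ln (1 / \<epsilon>)))))
    \<and> lower_mmdim \<phi> X =
        Liminf (at_right 0) (\<lambda>\<epsilon>. Limsup at_top (\<lambda>t. ereal (ln (real (sep_num \<phi> X t \<epsilon>)) / (t * ln (1 / \<epsilon>)))))"
proof -
  interpret compact_flow X \<phi>
    using assms by unfold_locales
  have small: "eventually (\<lambda>\<epsilon>. \<epsilon> \<in> {0<..<1::real}) (at_right 0)"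
    by (rule eventually_at_right_real) simp
  have cover: "eventually (\<lambda>\<epsilon>. ereal (Lim at_top (\<lambda>t. ln (real (cover_num \<phi> X t \<epsilon>)) / (t * ln (1 / \<epsilon>))))
      = ereal (cover_rate \<epsilon>) / ereal (ln (1 / \<epsilon>))) (at_right 0)"
    using small by eventually_elim (simp add: ereal_Lim_cover_growth_divide_ln)
  have sep: "eventually (\<lambda>\<epsilon>. Limsup at_top (\<lambda>t. ereal (ln (real (sep_num \<phi> X t \<epsilon>)) / (t * ln (1 / \<epsilon>))))
      = sep_rate \<epsilon> / ereal (ln (1 / \<epsilon>))) (at_right 0)"
    using small by eventually_elim (simp add: Limsup_sep_growth_divide_ln)
  have "\<forall>\<epsilon>>0. \<exists>L. ((\<lambda>t. ln (real (cover_num \<phi> X t \<epsilon>)) / t) \<longlongrightarrow> L) at_top"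
    using cover_rate_tendsto by blast
  then show ?thesis
    unfolding Limsup_eq[OF cover] Limsup_eq[OF sep] Liminf_eq[OF cover] Liminf_eq[OF sep]
    using upper_mmdim_eq_cover_rate lower_mmdim_eq_cover_rate upper_mmdim_eq_sep_rate lower_mmdim_eq_sep_rate
    by (intro conjI)
qed

end
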